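(* Let $c\in[\frac12,1)$ and let $d,\delta$ be positive integers with $d\ge\delta$. Let $G$ be a graph with maximum degree $\delta$ and $w:V(G)\to[0,1]$ a weight function with $w(V(G))=1$, and assume $G$ has no $d$-bounded $(w,c)$-balanced separator. Fix a bijection $\mathcal{O}:V(G)\to\{1,\dots,|V(G)|\}$. Then the relation $\le_A$ is a partial order on $V(G)$.
   Context: For $X\subseteq V(G)$, $w(X)=\sum_{x\in X}w(x)$; $N[v]=N(v)\cup\{v\}$; $N^d[v]$ is the set of vertices at distance at most $d$ from $v$. A set $X$ is $d$-bounded if $X\subseteq N^d[v]$ for some $v$. $X$ is a $(w,c)$-balanced separator if every connected component $D$ of $G\setminus X$ has $w(D)\le c$. For $v\in V(G)$, the canonical star separation $S_v=(A_v,C_v,B_v)$ is: $B_v$ the (under these assumptions unique) largest-weight connected component of $G\setminus N[v]$, $C_v$ the set consisting of $v$ and every vertex of $N(v)$ with a neighbor in $B_v$, and $A_v=V(G)\setminus(B_v\cup C_v)$. Two vertices $u,v$ are star twins if $B_u=B_v$, $C_u\setminus\{u\}=C_v\setminus\{v\}$ and $A_u\setminus\{v\}=A_v\setminus\{u\}$. The relation $\le_A$ is defined by: $x\le_A y$ if $x=y$, or $x,y$ are star twins and $\mathcal{O}(x)<\mathcal{O}(y)$, or $x,y$ are not star twins and $y\in A_x$. *)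

theory Defs
  imports Complex_Main
begin

definition simple_graph :: "'a set \<Rightarrow> ('a \<Rightarrow> 'a \<Rightarrow> bool) \<Rightarrow> bool" where
  "simple_graph V E \<longleftrightarrow> finite V \<and> (\<forall>x y. E x y \<longrightarrow> x \<in> V \<and> y \<in> V)
     \<and> (\<forall>x y. E x y \<longrightarrow> E y x) \<and> (\<forall>x. \<not> E x x)"

definition nbhd :: "'a set \<Rightarrow> ('a \<Rightarrow> 'a \<Rightarrow> bool) \<Rightarrow> 'a \<Rightarrow> 'a set" where
  "nbhd V E v = {u \<in> V. E v u}"

definition cnbhd :: "'a set \<Rightarrow> ('a \<Rightarrow> 'a \<Rightarrow> bool) \<Rightarrow> 'a \<Rightarrow> 'a set" where
  "cnbhd V E v = insert v (nbhd V E v)"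

definition max_degree :: "'a set \<Rightarrow> ('a \<Rightarrow> 'a \<Rightarrow> bool) \<Rightarrow> nat" where
  "max_degree V E = Max ((\<lambda>v. card (nbhd V E v)) ` V)"

definition ball_nbhd :: "'a set \<Rightarrow> ('a \<Rightarrow> 'a \<Rightarrow> bool) \<Rightarrow> nat \<Rightarrow> 'a \<Rightarrow> 'a set" where
  "ball_nbhd V E d v = {u \<in> V. \<exists>k\<le>d. ((\<lambda>a b. E a b \<and> a \<in> V \<and> b \<in> V) ^^ k) v u}"

definition d_bounded :: "'a set \<Rightarrow> ('a \<Rightarrow> 'a \<Rightarrow> bool) \<Rightarrow> nat \<Rightarrow> 'a set \<Rightarrow> bool" where
  "d_bounded V E d X \<longleftrightarrow> (\<exists>v\<in>V. X \<subseteq> ball_nbhd V E d v)"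

text \<open>Connected components of the induced subgraph G \ X.\<close>
definition components :: "'a set \<Rightarrow> ('a \<Rightarrow> 'a \<Rightarrow> bool) \<Rightarrow> 'a set \<Rightarrow> 'a set set" where
  "components V E X = {C. \<exists>x \<in> V - X. C = {y. (\<lambda>a b. E a b \<and> a \<in> V - X \<and> b \<in> V - X)\<^sup>*\<^sup>* x y}}"

definition weight :: "('a \<Rightarrow> real) \<Rightarrow> 'a set \<Rightarrow> real" where
  "weight w X = sum w X"

definition balanced_separator ::
  "'a set \<Rightarrow> ('a \<Rightarrow> 'a \<Rightarrow> bool) \<Rightarrow> ('a \<Rightarrow> real) \<Rightarrow> real \<Rightarrow> 'a set \<Rightarrow> bool" where
  "balanced_separator V E w c X \<longleftrightarrow> X \<subseteq> V \<and> (\<forall>D \<in> components V E X. weight w D \<le> c)"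

definition starB :: "'a set \<Rightarrow> ('a \<Rightarrow> 'a \<Rightarrow> bool) \<Rightarrow> ('a \<Rightarrow> real) \<Rightarrow> 'a \<Rightarrow> 'a set" where
  "starB V E w v = (THE D. D \<in> components V E (cnbhd V E v)
       \<and> (\<forall>D' \<in> components V E (cnbhd V E v). weight w D' \<le> weight w D))"

definition starC :: "'a set \<Rightarrow> ('a \<Rightarrow> 'a \<Rightarrow> bool) \<Rightarrow> ('a \<Rightarrow> real) \<Rightarrow> 'a \<Rightarrow> 'a set" where
  "starC V E w v = insert v {u \<in> nbhd V E v. \<exists>b \<in> starB V E w v. E u b}"

definition starA :: "'a set \<Rightarrow> ('a \<Rightarrow> 'a \<Rightarrow> bool) \<Rightarrow> ('a \<Rightarrow> real) \<Rightarrow> 'a \<Rightarrow> 'a set" where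
  "starA V E w v = V - (starB V E w v \<union> starC V E w v)"

definition star_twins :: "'a set \<Rightarrow> ('a \<Rightarrow> 'a \<Rightarrow> bool) \<Rightarrow> ('a \<Rightarrow> real) \<Rightarrow> 'a \<Rightarrow> 'a \<Rightarrow> bool" where
  "star_twins V E w u v \<longleftrightarrow> starB V E w u = starB V E w v
     \<and> starC V E w u - {u} = starC V E w v - {v}
     \<and> starA V E w u - {v} = starA V E w v - {u}"

definition leA :: "'a set \<Rightarrow> ('a \<Rightarrow> 'a \<Rightarrow> bool) \<Rightarrow> ('a \<Rightarrow> real) \<Rightarrow> ('a \<Rightarrow> nat) \<Rightarrow> 'a \<Rightarrow> 'a \<Rightarrow> bool" where
  "leA V E w ord x y \<longleftrightarrow> x = y
     \<or> (star_twins V E w x y \<and> ord x < ord y)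
     \<or> (\<not> star_twins V E w x y \<and> y \<in> starA V E w x)"

definition leA_rel :: "'a set \<Rightarrow> ('a \<Rightarrow> 'a \<Rightarrow> bool) \<Rightarrow> ('a \<Rightarrow> real) \<Rightarrow> ('a \<Rightarrow> nat) \<Rightarrow> 'a rel" where
  "leA_rel V E w ord = {(x, y). x \<in> V \<and> y \<in> V \<and> leA V E w ord x y}"

end

theory Submission
  imports Defs
begin

text \<open>
  Since N[v] is itself a d-bounded set, it is not a balanced separator, so G \ N[v] has
  a component of weight more than c \<ge> 1/2; such a component is unique, hence it is B_v.
  Consequently C_v = {v} \<union> N(B_v) and A_v = V - (B_v \<union> N(B_v)) - {v}, where N(B)
  denotes the outer neighbourhood of B, and u, v are star twins exactly when B_u = B_v.
  If y \<in> A_x then B_x is a connected heavy set avoiding N[y], so B_x \<subseteq> B_y;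
  and B \<mapsto> V - (B \<union> N(B)) is antitone. Thus \<le>_A refines inclusion of the sets B_v,
  with O ordering each twin class, which makes it a partial order.
\<close>

definition adj_outside :: "'a set \<Rightarrow> ('a \<Rightarrow> 'a \<Rightarrow> bool) \<Rightarrow> 'a set \<Rightarrow> 'a \<Rightarrow> 'a \<Rightarrow> bool" where
  "adj_outside V E X a b \<longleftrightarrow> E a b \<and> a \<in> V - X \<and> b \<in> V - X"

definition set_nbhd :: "'a set \<Rightarrow> ('a \<Rightarrow> 'a \<Rightarrow> bool) \<Rightarrow> 'a set \<Rightarrow> 'a set" where
  "set_nbhd V E B = {u \<in> V - B. \<exists>b\<in>B. E u b}"

lemma set_nbhd_closure_antimono:
  "S \<subseteq> T \<Longrightarrow> V - (T \<union> set_nbhd V E T) \<subseteq> V - (S \<union> set_nbhd V E S)"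
  by (auto simp: set_nbhd_def)

lemma components_eq:
  "components V E X = {{y. (adj_outside V E X)\<^sup>*\<^sup>* x y} | x. x \<in> V - X}"
  unfolding components_def adj_outside_def by blast

lemma rtranclp_adj_outside_mem:
  "(adj_outside V E X)\<^sup>*\<^sup>* x y \<Longrightarrow> x \<in> V - X \<Longrightarrow> y \<in> V - X"
  by (induction rule: rtranclp_induct) (auto simp: adj_outside_def)

lemma symp_adj_outside: "symp E \<Longrightarrow> symp (adj_outside V E X)"
  by (auto simp: symp_def adj_outside_def)

lemma component_subset: "D \<in> components V E X \<Longrightarrow> D \<subseteq> V - X"
  unfolding components_eq using rtranclp_adj_outside_mem by fastforce

lemma component_closed:
  assumes "D \<in> components V E X" "b \<in> D" "u \<in> V - X" "E b u"
  shows "u \<in> D"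
proof -
  obtain x where D: "D = {y. (adj_outside V E X)\<^sup>*\<^sup>* x y}"
    using assms(1) unfolding components_eq by blast
  have "adj_outside V E X b u"
    using assms component_subset[OF assms(1)] by (auto simp: adj_outside_def)
  then show ?thesis
    using assms(2) unfolding D by (auto intro: rtranclp.rtrancl_into_rtrancl)
qed

lemma components_disjoint:
  assumes "symp E"
    and "D1 \<in> components V E X" "D2 \<in> components V E X" "D1 \<noteq> D2"
  shows "D1 \<inter> D2 = {}"
proof (rule ccontr)
  assume "D1 \<inter> D2 \<noteq> {}"
  then obtain z where z: "z \<in> D1" "z \<in> D2" by blast
  let ?R = "(adj_outside V E X)\<^sup>*\<^sup>*"
  obtain x1 x2 where D: "D1 = {y. ?R x1 y}" "D2 = {y. ?R x2 y}"
    using assms(2,3) unfolding components_eq by blast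
  have "symp ?R"
    using symp_adj_outside[OF assms(1)] by (simp add: symp_rtranclp)
  then have "?R x1 x2" "?R x2 x1"
    using z unfolding D by (auto intro: rtranclp_trans dest: sympD)
  then have "D1 = D2"
    unfolding D by (auto intro: rtranclp_trans)
  then show False using assms(4) by contradiction
qed

lemma component_subset_component:
  assumes "D \<in> components V E X" "D \<inter> Y = {}"
  shows "\<exists>D' \<in> components V E Y. D \<subseteq> D'"
proof -
  obtain x where x: "x \<in> V - X" and D: "D = {y. (adj_outside V E X)\<^sup>*\<^sup>* x y}"
    using assms(1) unfolding components_eq by blast
  have xY: "x \<in> V - Y" using x assms(2) unfolding D by blast
  have "(adj_outside V E Y)\<^sup>*\<^sup>* x z" if "(adj_outside V E X)\<^sup>*\<^sup>* x z" for z
    using that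
  proof (induction rule: rtranclp_induct)
    case (step u z)
    have "u \<in> D" "z \<in> D"
      using step.hyps unfolding D by (auto intro: rtranclp.rtrancl_into_rtrancl)
    then have "adj_outside V E Y u z"
      using step.hyps(2) assms(2) by (auto simp: adj_outside_def)
    then show ?case using step.IH by (auto intro: rtranclp.rtrancl_into_rtrancl)
  qed simp
  then have "D \<subseteq> {y. (adj_outside V E Y)\<^sup>*\<^sup>* x y}" unfolding D by blast
  moreover have "{y. (adj_outside V E Y)\<^sup>*\<^sup>* x y} \<in> components V E Y"
    using xY unfolding components_eq by blast
  ultimately show ?thesis by blast
qed

lemma weight_mono:
  assumes "finite V" "\<forall>v \<in> V. 0 \<le> w v" "A \<subseteq> B" "B \<subseteq> V"
  shows "weight w A \<le> weight w B"
  unfolding weight_def using assms by (intro sum_mono2) (auto intro: finite_subset)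

lemma weight_two_components_le:
  assumes "simple_graph V E" "\<forall>v \<in> V. 0 \<le> w v"
    and "D1 \<in> components V E X" "D2 \<in> components V E X" "D1 \<noteq> D2"
  shows "weight w D1 + weight w D2 \<le> weight w V"
proof -
  have fin: "finite V" and sym: "symp E"
    using assms(1) by (auto simp: simple_graph_def symp_def)
  have sub: "D1 \<subseteq> V" "D2 \<subseteq> V" using component_subset assms(3,4) by blast+
  have "weight w D1 + weight w D2 = weight w (D1 \<union> D2)"
    unfolding weight_def using components_disjoint[OF sym assms(3-5)] sub fin
    by (simp add: sum.union_disjoint finite_subset)
  also have "\<dots> \<le> weight w V"
    using weight_mono[OF fin assms(2)] sub by simp
  finally show ?thesis .
qed

lemma heaviest_component_eq:
  assumes "simple_graph V E" "\<forall>v \<in> V. 0 \<le> w v"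
    and D: "D \<in> components V E X" "weight w V < 2 * weight w D"
  shows "(THE D. D \<in> components V E X
            \<and> (\<forall>D' \<in> components V E X. weight w D' \<le> weight w D)) = D"
proof (rule the_equality)
  have "weight w D' \<le> weight w D" if "D' \<in> components V E X" for D'
    using weight_two_components_le[OF assms(1,2) that D(1)] D(2) by fastforce
  then show "D \<in> components V E X \<and> (\<forall>D' \<in> components V E X. weight w D' \<le> weight w D)"
    using D(1) by blast
next
  fix M assume M: "M \<in> components V E X \<and> (\<forall>D' \<in> components V E X. weight w D' \<le> weight w M)"
  then have "weight w D \<le> weight w M" using D(1) by blast
  then show "M = D"
    using weight_two_components_le[OF assms(1,2) conjunct1[OF M] D(1)] D(2) by fastforce
qed

lemma partial_order_on_refining_inclusion:
  fixes B :: "'a \<Rightarrow> 'b set" and R :: "'b set \<Rightarrow> 'a set" and ord :: "'a \<Rightarrow> 'c::order"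
  assumes mem_own: "\<And>v. v \<in> V \<Longrightarrow> v \<in> R (B v)"
    and antitone: "\<And>S T. S \<subseteq> T \<Longrightarrow> R T \<subseteq> R S"
    and grow: "\<And>x y. x \<in> V \<Longrightarrow> y \<in> V \<Longrightarrow> y \<in> R (B x) \<Longrightarrow> y \<noteq> x \<Longrightarrow> B x \<subseteq> B y"
  shows "partial_order_on V {(x, y). x \<in> V \<and> y \<in> V \<and> (x = y
           \<or> (B x = B y \<and> ord x < ord y) \<or> (B x \<noteq> B y \<and> y \<in> R (B x) - {x}))}"
    (is "partial_order_on V ?le")
proof -
  have step: "B x \<subseteq> B y \<and> y \<in> R (B x)" if "(x, y) \<in> ?le" "x \<noteq> y" for x y
    using that grow mem_own by auto
  have "trans ?le"
  proof (rule transI)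
    fix x y z assume xy: "(x, y) \<in> ?le" and yz: "(y, z) \<in> ?le"
    show "(x, z) \<in> ?le"
    proof (cases "x = y \<or> y = z \<or> x = z")
      case True
      then show ?thesis using xy yz by auto
    next
      case False
      then have B: "B x \<subseteq> B y" "B y \<subseteq> B z" and "z \<in> R (B y)"
        using step xy yz by blast+
      then have "z \<in> R (B x)" using antitone by blast
      moreover have "ord x < ord z" if "B x = B z"
        using xy yz B that False by (auto dest: order.strict_trans)
      ultimately show ?thesis using xy yz False by auto
    qed
  qed
  moreover have "antisym ?le"
  proof (rule antisymI)
    fix x y assume xy: "(x, y) \<in> ?le" and yx: "(y, x) \<in> ?le"
    show "x = y"
    proof (rule ccontr)
      assume ne: "x \<noteq> y"
      then have "B x = B y" using step xy yx by blast
      then show False using xy yx ne by auto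
    qed
  qed
  moreover have "refl_on V ?le"
    by (auto simp: refl_on_def)
  ultimately show ?thesis
    unfolding partial_order_on_def preorder_on_def by blast
qed

locale heavy_star_graph =
  fixes V :: "'a set" and E :: "'a \<Rightarrow> 'a \<Rightarrow> bool" and w :: "'a \<Rightarrow> real"
  assumes simple: "simple_graph V E"
    and nonneg: "\<forall>v \<in> V. 0 \<le> w v"
    and heavy_component:
      "\<And>v. v \<in> V \<Longrightarrow> \<exists>D \<in> components V E (cnbhd V E v). weight w V < 2 * weight w D"
begin

lemma finite_vertices: "finite V"
  using simple by (simp add: simple_graph_def)

lemma edge_sym: "E x y \<Longrightarrow> E y x"
  using simple by (simp add: simple_graph_def)

lemma starB_eq:
  assumes "D \<in> components V E (cnbhd V E v)" "weight w V < 2 * weight w D"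
  shows "starB V E w v = D"
  unfolding starB_def using heaviest_component_eq[OF simple nonneg assms] .

lemma starB_component:
  assumes "v \<in> V"
  shows "starB V E w v \<in> components V E (cnbhd V E v)"
    and "weight w V < 2 * weight w (starB V E w v)"
  using heavy_component[OF assms] starB_eq by auto

lemma starB_subset: "v \<in> V \<Longrightarrow> starB V E w v \<subseteq> V - cnbhd V E v"
  using component_subset starB_component(1) by blast

lemma not_in_starB_closure:
  assumes "v \<in> V"
  shows "v \<notin> starB V E w v \<union> set_nbhd V E (starB V E w v)"
  using starB_subset[OF assms] by (auto simp: set_nbhd_def cnbhd_def nbhd_def)

lemma starC_eq:
  assumes "v \<in> V"
  shows "starC V E w v = insert v (set_nbhd V E (starB V E w v))"
proof -
  let ?B = "starB V E w v"
  have "u \<in> nbhd V E v" if u: "u \<in> set_nbhd V E ?B" for u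
  proof -
    obtain b where b: "b \<in> ?B" "E u b" "u \<in> V" "u \<notin> ?B"
      using u by (auto simp: set_nbhd_def)
    have "u \<in> cnbhd V E v"
      using component_closed[OF starB_component(1)[OF assms] b(1) _ edge_sym[OF b(2)]] b(3,4)
      by blast
    moreover have "u \<noteq> v"
      using b starB_subset[OF assms] by (auto simp: cnbhd_def nbhd_def)
    ultimately show ?thesis by (simp add: cnbhd_def)
  qed
  moreover have "nbhd V E v \<inter> ?B = {}"
    using starB_subset[OF assms] by (auto simp: cnbhd_def)
  ultimately show ?thesis
    unfolding starC_def set_nbhd_def by (auto simp: nbhd_def)
qed

lemma starA_eq:
  "v \<in> V \<Longrightarrow> starA V E w v = V - (starB V E w v \<union> set_nbhd V E (starB V E w v)) - {v}"
  unfolding starA_def by (auto simp: starC_eq)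

lemma star_twins_iff:
  assumes "u \<in> V" "v \<in> V"
  shows "star_twins V E w u v \<longleftrightarrow> starB V E w u = starB V E w v"
  unfolding star_twins_def using assms not_in_starB_closure
  by (auto simp: starA_eq starC_eq)

lemma starB_subset_if_in_starA:
  assumes x: "x \<in> V" and y: "y \<in> V" and yA: "y \<in> starA V E w x"
  shows "starB V E w x \<subseteq> starB V E w y"
proof -
  let ?Bx = "starB V E w x"
  have "?Bx \<inter> cnbhd V E y = {}"
    using yA starA_eq[OF x] y by (auto simp: cnbhd_def nbhd_def set_nbhd_def)
  then obtain D where D: "D \<in> components V E (cnbhd V E y)" "?Bx \<subseteq> D"
    using component_subset_component[OF starB_component(1)[OF x]] by blast
  have "weight w ?Bx \<le> weight w D"
    using weight_mono[OF finite_vertices nonneg D(2)] component_subset[OF D(1)] by blast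
  then have "starB V E w y = D"
    using starB_eq[OF D(1)] starB_component(2)[OF x] by linarith
  then show ?thesis using D(2) by simp
qed

lemma partial_order_leA_rel: "partial_order_on V (leA_rel V E w ord)"
proof -
  let ?B = "starB V E w" and ?R = "\<lambda>B. V - (B \<union> set_nbhd V E B)"
  have "leA_rel V E w ord = {(x, y). x \<in> V \<and> y \<in> V \<and> (x = y
          \<or> (?B x = ?B y \<and> ord x < ord y) \<or> (?B x \<noteq> ?B y \<and> y \<in> ?R (?B x) - {x}))}"
    (is "_ = ?le")
    unfolding leA_rel_def leA_def by (auto simp: star_twins_iff starA_eq)
  moreover have "partial_order_on V ?le"
  proof (rule partial_order_on_refining_inclusion)
    show "v \<in> ?R (?B v)" if "v \<in> V" for v
      using not_in_starB_closure[OF that] that by blast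
    show "?R T \<subseteq> ?R S" if "S \<subseteq> T" for S T
      using set_nbhd_closure_antimono[OF that] .
    show "?B x \<subseteq> ?B y" if "x \<in> V" "y \<in> V" "y \<in> ?R (?B x)" "y \<noteq> x" for x y
      using starB_subset_if_in_starA that by (simp add: starA_eq)
  qed
  ultimately show ?thesis by simp
qed

end

lemma cnbhd_subset_ball_nbhd:
  assumes "0 < d" "v \<in> V"
  shows "cnbhd V E v \<subseteq> ball_nbhd V E d v"
proof
  fix u assume u: "u \<in> cnbhd V E v"
  show "u \<in> ball_nbhd V E d v"
  proof (cases "u = v")
    case True
    then show ?thesis unfolding ball_nbhd_def using assms(2) by force
  next
    case False
    then have "u \<in> V" "E v u" using u by (auto simp: cnbhd_def nbhd_def)
    then show ?thesis unfolding ball_nbhd_def using assms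
      by (intro CollectI conjI exI[of _ 1]) auto
  qed
qed

lemma heavy_component_if_no_balanced_separator:
  assumes "0 < d" "v \<in> V"
    and "\<not> (\<exists>X. d_bounded V E d X \<and> balanced_separator V E w c X)"
  shows "\<exists>D \<in> components V E (cnbhd V E v). c < weight w D"
proof -
  have "d_bounded V E d (cnbhd V E v)"
    unfolding d_bounded_def using cnbhd_subset_ball_nbhd[OF assms(1,2)] assms(2) by blast
  moreover have "cnbhd V E v \<subseteq> V"
    using assms(2) by (auto simp: cnbhd_def nbhd_def)
  ultimately show ?thesis
    using assms(3) unfolding balanced_separator_def by force
qed

theorem lemma4p3:
  fixes V :: "'a set" and E :: "'a \<Rightarrow> 'a \<Rightarrow> bool" and w :: "'a \<Rightarrow> real"
    and c :: real and d \<delta> :: nat and ord :: "'a \<Rightarrow> nat"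
  assumes "1/2 \<le> c" and "c < 1"
    and "0 < d" and "0 < \<delta>" and "\<delta> \<le> d"
    and "simple_graph V E"
    and "max_degree V E = \<delta>"
    and "\<forall>v \<in> V. 0 \<le> w v \<and> w v \<le> 1"
    and "weight w V = 1"
    and "\<not> (\<exists>X. d_bounded V E d X \<and> balanced_separator V E w c X)"
    and "bij_betw ord V {1..card V}"
  shows "partial_order_on V (leA_rel V E w ord)"
proof -
  have "\<exists>D \<in> components V E (cnbhd V E v). weight w V < 2 * weight w D" if v: "v \<in> V" for v
  proof -
    obtain D where "D \<in> components V E (cnbhd V E v)" "c < weight w D"
      using heavy_component_if_no_balanced_separator[OF assms(3) v assms(10)] by blast
    then show ?thesis using assms(1,9) by (intro bexI[of _ D]) auto
  qed
  then interpret heavy_star_graph V E w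
    using assms(6,8) by unfold_locales auto
  show ?thesis by (rule partial_order_leA_rel)
qed

end
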